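(* Let $f$ be a bounded holomorphic function on the open unit disk $\mathbb{D}=\{z\in\mathbb{C}:|z|<1\}$, with $\|f\|_{H^\infty}=\sup_{z\in\mathbb{D}}|f(z)|$. For $0\le r<1$ define $$A(r,f)=\int_0^r\int_0^{2\pi}|f'(\rho e^{i\theta})|^2\,\rho\,d\theta\,d\rho .$$ Then for every $0\le r<1$, $$A(r,f)\le \frac12\,\|f\|_{H^\infty}\int_0^{2\pi}|f'(re^{i\theta})|\,d\theta .$$
   Context: $H^\infty$ denotes the space of bounded holomorphic functions on the unit disk $\mathbb{D}$ with the supremum norm. The quantity $A(r,f)$ is the area (counted with multiplicity) of the image of the closed disk $\{|z|\le r\}$ under $f$. *)

theory Defs
  imports "HOL-Complex_Analysis.Complex_Analysis"
begin

definition Hinf_norm :: "(complex \<Rightarrow> complex) \<Rightarrow> real" where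
  "Hinf_norm f = (SUP z\<in>ball 0 1. cmod (f z))"

text \<open>A(r,f): area (with multiplicity) of the image of the closed disk of radius r,
  written as the iterated integral of |f'|^2 in polar coordinates.\<close>
definition area_fn :: "real \<Rightarrow> (complex \<Rightarrow> complex) \<Rightarrow> real" where
  "area_fn r f = integral {0..r}
     (\<lambda>\<rho>. integral {0..2*pi} (\<lambda>\<theta>. (cmod (deriv f (of_real \<rho> * cis \<theta>)))\<^sup>2 * \<rho>))"

end

theory Submission
  imports Defs
begin

text \<open>Write f z = (\<Sum>n. a n * z^n). Parseval's identity on the circle |z| = \<rho> gives
  \<integral> |f'(\<rho> e^(i\<theta>))|^2 d\<theta> = 2\<pi> \<Sum> n^2 |a n|^2 \<rho>^(2n-2), and integrating against \<rho> d\<rho>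
  yields A(r,f) = \<pi> \<Sum> n |a n|^2 r^(2n). The same identity, applied to f and z f'(z), shows that
  \<integral> conj(f z) z f'(z) d\<theta> over |z| = r equals 2\<pi> \<Sum> n |a n|^2 r^(2n) = 2 A(r,f). Bounding |f| by
  its sup norm and |z| by 1 inside this integral gives the estimate.\<close>

lemma sums_integral_Weierstrass:
  fixes u :: "nat \<Rightarrow> real \<Rightarrow> 'a::banach"
  assumes cont: "\<And>n. continuous_on {a..b} (u n)"
    and bound: "\<And>n x. x \<in> {a..b} \<Longrightarrow> norm (u n x) \<le> M n"
    and "summable M"
  shows "(\<lambda>n. integral {a..b} (u n)) sums integral {a..b} (\<lambda>x. \<Sum>n. u n x)"
proof -
  have U: "uniform_limit {a..b} (\<lambda>n x. \<Sum>i<n. u i x) (\<lambda>x. \<Sum>i. u i x) sequentially"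
    using bound \<open>summable M\<close> by (rule Weierstrass_m_test)
  have C: "continuous_on {a..b} (\<lambda>x. \<Sum>i<n. u i x)" for n
    by (intro continuous_on_sum cont)
  obtain I J where I: "\<And>n. ((\<lambda>x. \<Sum>i<n. u i x) has_integral I n) {a..b}"
    and J: "((\<lambda>x. \<Sum>i. u i x) has_integral J) {a..b}" and "I \<longlonglongrightarrow> J"
    using uniform_limit_integral[OF U C] by auto
  have "I n = (\<Sum>i<n. integral {a..b} (u i))" for n
  proof -
    have "I n = integral {a..b} (\<lambda>x. \<Sum>i<n. u i x)"
      using I[of n] by (simp add: integral_unique)
    also have "\<dots> = (\<Sum>i<n. integral {a..b} (u i))"
      by (rule integral_sum) (auto intro: integrable_continuous_interval cont)
    finally show ?thesis .
  qed
  then have "(\<lambda>n. \<Sum>i<n. integral {a..b} (u i)) = I"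
    by (simp add: fun_eq_iff)
  then show ?thesis
    using \<open>I \<longlonglongrightarrow> J\<close> J by (simp add: sums_def integral_unique)
qed

lemma integral_cis_multiple:
  assumes "k \<in> \<int>" "k \<noteq> 0"
  shows "integral {0..2*pi} (\<lambda>t. cis (k * t)) = 0"
proof -
  have cis_exp: "cis (k * t) = exp ((\<i> * of_real k) * of_real t)" for t
    by (simp add: cis_conv_exp mult.assoc)
  have "exp ((\<i> * of_real k) * of_real (2*pi)) = 1"
    using cis_multiple_2pi[OF assms(1)] cis_exp[of "2*pi"] by (simp add: mult.commute)
  then show ?thesis
    unfolding cis_exp using assms Kronecker_Approximation_Theorem.integral_exp[of "2*pi" "\<i> * of_real k"]
    by simp
qed

lemma cnj_rcis: "cnj (rcis r a) = rcis r (- a)"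
  by (simp add: rcis_def cis_cnj)

lemma integral_cnj_rcis_power_mult_power:
  "integral {0..2*pi} (\<lambda>\<theta>. cnj (rcis \<rho> \<theta>) ^ n * rcis \<rho> \<theta> ^ m)
     = (if m = n then of_real (2*pi*\<rho>^(2*n)) else 0)"
proof -
  have monomial: "cnj (rcis \<rho> \<theta>) ^ n * rcis \<rho> \<theta> ^ m
      = of_real (\<rho>^(n+m)) * cis ((real m - real n) * \<theta>)" for \<theta>
  proof -
    have "cnj (rcis \<rho> \<theta>) ^ n * rcis \<rho> \<theta> ^ m = rcis (\<rho>^n * \<rho>^m) (real n * - \<theta> + real m * \<theta>)"
      by (simp only: cnj_rcis DeMoivre2 rcis_mult)
    then show ?thesis
      by (simp add: rcis_def power_add algebra_simps)
  qed
  show ?thesis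
  proof (cases "m = n")
    case True
    then have "(\<lambda>\<theta>. cnj (rcis \<rho> \<theta>) ^ n * rcis \<rho> \<theta> ^ m) = (\<lambda>\<theta>. of_real (\<rho>^(2*n)))"
      unfolding monomial by (simp add: mult_2)
    then show ?thesis
      using True by (simp add: scaleR_conv_of_real)
  next
    case False
    then have "integral {0..2*pi} (\<lambda>\<theta>. cis ((real m - real n) * \<theta>)) = 0"
      by (intro integral_cis_multiple) auto
    then show ?thesis
      using False by (simp add: monomial)
  qed
qed

lemma integral_cnj_rcis_power_mult_power_series:
  fixes c :: "nat \<Rightarrow> complex" and H :: "real \<Rightarrow> complex"
  assumes "0 \<le> \<rho>"
    and H: "\<And>\<theta>. (\<lambda>m. c m * rcis \<rho> \<theta> ^ m) sums H \<theta>"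
    and "summable (\<lambda>m. norm (c m) * \<rho>^m)"
  shows "integral {0..2*pi} (\<lambda>\<theta>. cnj (rcis \<rho> \<theta>) ^ n * H \<theta>) = of_real (2*pi*\<rho>^(2*n)) * c n"
proof -
  define u where "u m \<theta> = c m * (cnj (rcis \<rho> \<theta>) ^ n * rcis \<rho> \<theta> ^ m)" for m \<theta>
  have "(\<lambda>m. integral {0..2*pi} (u m)) sums integral {0..2*pi} (\<lambda>\<theta>. \<Sum>m. u m \<theta>)"
  proof (rule sums_integral_Weierstrass)
    show "continuous_on {0..2*pi} (u m)" for m
      unfolding u_def by (intro continuous_intros)
    show "norm (u m \<theta>) \<le> \<rho>^n * (norm (c m) * \<rho>^m)" for m \<theta>
      using \<open>0 \<le> \<rho>\<close> by (simp add: u_def norm_mult norm_power cnj_rcis)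
    show "summable (\<lambda>m. \<rho>^n * (norm (c m) * \<rho>^m))"
      using assms(3) by (rule summable_mult)
  qed
  moreover have "(\<Sum>m. u m \<theta>) = cnj (rcis \<rho> \<theta>) ^ n * H \<theta>" for \<theta>
    using sums_mult[OF H[of \<theta>], of "cnj (rcis \<rho> \<theta>) ^ n"] by (simp add: u_def sums_iff mult_ac)
  moreover have "integral {0..2*pi} (u m) = (if m = n then of_real (2*pi*\<rho>^(2*m)) * c m else 0)" for m
    unfolding u_def integral_mult_right integral_cnj_rcis_power_mult_power by simp
  ultimately have "(\<lambda>m. if m = n then of_real (2*pi*\<rho>^(2*m)) * c m else 0)
      sums integral {0..2*pi} (\<lambda>\<theta>. cnj (rcis \<rho> \<theta>) ^ n * H \<theta>)"
    by simp
  from sums_unique2[OF this sums_single] show ?thesis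
    by simp
qed

lemma integral_cnj_power_series_mult_power_series:
  fixes b c :: "nat \<Rightarrow> complex" and G H :: "real \<Rightarrow> complex"
  assumes "0 \<le> \<rho>"
    and G: "\<And>\<theta>. (\<lambda>n. b n * rcis \<rho> \<theta> ^ n) sums G \<theta>"
    and H: "\<And>\<theta>. (\<lambda>n. c n * rcis \<rho> \<theta> ^ n) sums H \<theta>"
    and "continuous_on {0..2*pi} H"
    and b: "summable (\<lambda>n. norm (b n) * \<rho>^n)"
    and c: "summable (\<lambda>n. norm (c n) * \<rho>^n)"
  shows "(\<lambda>n. of_real (2*pi*\<rho>^(2*n)) * (cnj (b n) * c n))
           sums integral {0..2*pi} (\<lambda>\<theta>. cnj (G \<theta>) * H \<theta>)"
proof -
  define K where "K = (\<Sum>n. norm (c n) * \<rho>^n)"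
  have H_bound: "norm (H \<theta>) \<le> K" for \<theta>
  proof -
    have "summable (\<lambda>n. norm (c n * rcis \<rho> \<theta> ^ n))"
      using c \<open>0 \<le> \<rho>\<close> by (simp add: norm_mult norm_power)
    moreover have "H \<theta> = (\<Sum>n. c n * rcis \<rho> \<theta> ^ n)"
      using H[of \<theta>] by (simp add: sums_iff)
    ultimately have "norm (H \<theta>) \<le> (\<Sum>n. norm (c n * rcis \<rho> \<theta> ^ n))"
      by (simp add: summable_norm)
    also have "\<dots> = K"
      using \<open>0 \<le> \<rho>\<close> by (simp add: K_def norm_mult norm_power)
    finally show ?thesis .
  qed
  define u where "u n \<theta> = cnj (b n) * (cnj (rcis \<rho> \<theta>) ^ n * H \<theta>)" for n \<theta>
  have "(\<lambda>n. integral {0..2*pi} (u n)) sums integral {0..2*pi} (\<lambda>\<theta>. \<Sum>n. u n \<theta>)"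
  proof (rule sums_integral_Weierstrass)
    show "continuous_on {0..2*pi} (u n)" for n
      unfolding u_def by (intro continuous_intros assms(4))
    show "norm (u n \<theta>) \<le> K * (norm (b n) * \<rho>^n)" for n \<theta>
    proof -
      have "norm (u n \<theta>) = (norm (b n) * \<rho>^n) * norm (H \<theta>)"
        using \<open>0 \<le> \<rho>\<close> by (simp add: u_def norm_mult norm_power cnj_rcis)
      also have "\<dots> \<le> (norm (b n) * \<rho>^n) * K"
        using H_bound \<open>0 \<le> \<rho>\<close> by (intro mult_left_mono) auto
      finally show ?thesis by (simp add: mult_ac)
    qed
    show "summable (\<lambda>n. K * (norm (b n) * \<rho>^n))"
      using b by (rule summable_mult)
  qed
  moreover have "(\<Sum>n. u n \<theta>) = cnj (G \<theta>) * H \<theta>" for \<theta>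
  proof -
    have "(\<lambda>n. cnj (b n * rcis \<rho> \<theta> ^ n)) sums cnj (G \<theta>)"
      using G[of \<theta>] by (simp only: sums_cnj)
    then have "(\<lambda>n. cnj (b n * rcis \<rho> \<theta> ^ n) * H \<theta>) sums (cnj (G \<theta>) * H \<theta>)"
      by (rule sums_mult2)
    then show ?thesis by (simp add: u_def sums_iff mult_ac)
  qed
  moreover have "integral {0..2*pi} (u n) = of_real (2*pi*\<rho>^(2*n)) * (cnj (b n) * c n)" for n
    unfolding u_def integral_mult_right integral_cnj_rcis_power_mult_power_series[OF \<open>0 \<le> \<rho>\<close> H c]
    by (simp add: mult_ac)
  ultimately show ?thesis by simp
qed

definition taylor_coeff :: "(complex \<Rightarrow> complex) \<Rightarrow> nat \<Rightarrow> complex" where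
  "taylor_coeff g n = (deriv ^^ n) g 0 / fact n"

lemma sums_taylor_coeff:
  assumes "g holomorphic_on ball 0 R" "norm z < R"
  shows "(\<lambda>n. taylor_coeff g n * z^n) sums g z"
  using holomorphic_power_series[OF assms(1), of z] assms(2) by (simp add: taylor_coeff_def)

lemma summable_norm_taylor_coeff:
  assumes "g holomorphic_on ball 0 R" "0 \<le> \<rho>" "\<rho> < R"
  shows "summable (\<lambda>n. norm (taylor_coeff g n) * \<rho>^n)"
proof -
  define z :: complex where "z = of_real ((\<rho> + R) / 2)"
  have "norm (of_real \<rho> :: complex) < norm z" "norm z < R"
    unfolding z_def norm_of_real using assms by simp_all
  have "summable (\<lambda>n. taylor_coeff g n * z^n)"
    by (rule sums_summable[OF sums_taylor_coeff[OF assms(1) \<open>norm z < R\<close>]])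
  then have "summable (\<lambda>n. norm (taylor_coeff g n * of_real \<rho> ^ n))"
    using \<open>norm (of_real \<rho>) < norm z\<close> by (rule powser_insidea)
  then show ?thesis
    using assms(2) by (simp add: norm_mult norm_power)
qed

lemma taylor_coeff_deriv: "taylor_coeff (deriv g) n = of_nat (Suc n) * taylor_coeff g (Suc n)"
proof -
  have "(deriv ^^ n) (deriv g) = (deriv ^^ Suc n) g"
    by (simp add: funpow_Suc_right del: funpow.simps)
  then show ?thesis
    unfolding taylor_coeff_def by (simp add: divide_simps del: funpow.simps of_nat_Suc)
qed

lemma continuous_on_compose_rcis:
  assumes "continuous_on (ball 0 R) g" "0 \<le> \<rho>" "\<rho> < R"
  shows "continuous_on S (\<lambda>\<theta>. g (rcis \<rho> \<theta>))"
  by (rule continuous_on_compose2[OF assms(1) continuous_on_rcis[OF continuous_on_const continuous_on_id]])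
    (use assms(2,3) in auto)

lemma sums_integral_norm_sq_circle:
  assumes "g holomorphic_on ball 0 R" "0 \<le> \<rho>" "\<rho> < R"
  shows "(\<lambda>n. 2*pi*\<rho>^(2*n) * norm (taylor_coeff g n)^2)
           sums integral {0..2*pi} (\<lambda>\<theta>. norm (g (rcis \<rho> \<theta>))^2)"
proof -
  have g_sums: "(\<lambda>n. taylor_coeff g n * rcis \<rho> \<theta> ^ n) sums g (rcis \<rho> \<theta>)" for \<theta>
    using assms by (intro sums_taylor_coeff) auto
  have cont: "continuous_on {0..2*pi} (\<lambda>\<theta>. g (rcis \<rho> \<theta>))"
    using assms by (intro continuous_on_compose_rcis holomorphic_on_imp_continuous_on)
  have cnj_mult_self: "cnj z * z = of_real (norm z ^ 2)" for z :: complex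
    using complex_norm_square[of z] by (simp add: mult.commute)
  have "(\<lambda>n. of_real (2*pi*\<rho>^(2*n)) * (cnj (taylor_coeff g n) * taylor_coeff g n))
          sums integral {0..2*pi} (\<lambda>\<theta>. cnj (g (rcis \<rho> \<theta>)) * g (rcis \<rho> \<theta>))"
    using summable_norm_taylor_coeff[OF assms]
    by (intro integral_cnj_power_series_mult_power_series g_sums cont assms(2))
  also have "integral {0..2*pi} (\<lambda>\<theta>. cnj (g (rcis \<rho> \<theta>)) * g (rcis \<rho> \<theta>))
      = of_real (integral {0..2*pi} (\<lambda>\<theta>. norm (g (rcis \<rho> \<theta>))^2))"
    unfolding cnj_mult_self
    by (intro integral_unique has_integral_of_real integrable_integral integrable_continuous_interval
        continuous_intros cont)
  finally show ?thesis
    unfolding cnj_mult_self of_real_mult[symmetric] sums_of_real_iff .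
qed

lemma integral_power_from_0:
  assumes "0 \<le> r"
  shows "integral {0..r} (\<lambda>x::real. x^k) = r^Suc k / Suc k"
proof -
  have "((\<lambda>x::real. x^k) has_integral (r^Suc k / Suc k - 0^Suc k / Suc k)) {0..r}"
  proof (rule fundamental_theorem_of_calculus)
    show "((\<lambda>x. x^Suc k / Suc k) has_vector_derivative x^k) (at x within {0..r})" for x
      using DERIV_cdivide[OF DERIV_pow[of "Suc k" x], of "Suc k"]
      by (simp add: has_real_derivative_iff_has_vector_derivative del: of_nat_Suc)
  qed (use assms in auto)
  then show ?thesis
    by (simp add: integral_unique)
qed

lemma area_fn_sums:
  assumes "f holomorphic_on ball 0 R" "0 \<le> r" "r < R"
  shows "(\<lambda>n. pi * n * norm (taylor_coeff f n)^2 * r^(2*n)) sums area_fn r f"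
proof -
  define b where "b = taylor_coeff (deriv f)"
  have f': "deriv f holomorphic_on ball 0 R"
    using assms(1) by (intro holomorphic_deriv) auto
  define u where "u n \<rho> = 2*pi*norm (b n)^2 * \<rho>^(2*n+1)" for n and \<rho> :: real
  have circle: "(\<lambda>n. u n \<rho>) sums integral {0..2*pi} (\<lambda>\<theta>. norm (deriv f (rcis \<rho> \<theta>))^2 * \<rho>)"
    if "0 \<le> \<rho>" "\<rho> < R" for \<rho>
    using sums_mult2[OF sums_integral_norm_sq_circle[OF f' that], of \<rho>]
    by (simp add: u_def b_def mult_ac)
  have "(\<lambda>n. integral {0..r} (u n)) sums integral {0..r} (\<lambda>\<rho>. \<Sum>n. u n \<rho>)"
  proof (rule sums_integral_Weierstrass)
    show "continuous_on {0..r} (u n)" for n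
      unfolding u_def by (intro continuous_intros)
    show "norm (u n \<rho>) \<le> u n r" if "\<rho> \<in> {0..r}" for n \<rho>
      using that unfolding u_def by (auto intro!: mult_left_mono mult_mono power_mono)
    show "summable (\<lambda>n. u n r)"
      using circle[OF assms(2,3)] by (rule sums_summable)
  qed
  also have "integral {0..r} (\<lambda>\<rho>. \<Sum>n. u n \<rho>) = area_fn r f"
    unfolding area_fn_def rcis_def[symmetric] using circle assms
    by (intro integral_cong) (simp add: sums_iff)
  finally have "(\<lambda>n. integral {0..r} (u n)) sums area_fn r f" .
  moreover have "integral {0..r} (u n) = pi * Suc n * norm (taylor_coeff f (Suc n))^2 * r^(2 * Suc n)" for n
  proof -
    have "integral {0..r} (u n) = 2*pi*norm (b n)^2 * (r^Suc (2*n+1) / real (Suc (2*n+1)))"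
      unfolding u_def integral_mult_right integral_power_from_0[OF assms(2)] ..
    also have "Suc (2*n+1) = 2 * Suc n"
      by simp
    also have "norm (b n) = Suc n * norm (taylor_coeff f (Suc n))"
      by (simp add: b_def taylor_coeff_deriv norm_mult del: of_nat_Suc)
    finally have "integral {0..r} (u n)
        = 2*pi*(Suc n * norm (taylor_coeff f (Suc n)))^2 * (r^(2 * Suc n) / (2 * real (Suc n)))"
      by (simp only: of_nat_mult of_nat_numeral)
    moreover have "2*pi*(c*x)^2 * (y / (2*c)) = pi*c*x^2*y" if "c \<noteq> 0" for c x y :: real
      using that by (simp add: field_simps power2_eq_square)
    ultimately show ?thesis
      using of_nat_neq_0 by metis
  qed
  ultimately have "(\<lambda>n. pi * Suc n * norm (taylor_coeff f (Suc n))^2 * r^(2 * Suc n)) sums area_fn r f"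
    by simp
  then show ?thesis
    using sums_Suc_iff[of "\<lambda>n. pi * n * norm (taylor_coeff f n)^2 * r^(2*n)" "area_fn r f"] by simp
qed

lemma sums_mult_deriv_taylor_coeff:
  assumes "f holomorphic_on ball 0 R" "norm z < R"
  shows "(\<lambda>n. of_nat n * taylor_coeff f n * z^n) sums (z * deriv f z)"
proof -
  have "(\<lambda>n. taylor_coeff (deriv f) n * z^n) sums deriv f z"
    using assms by (intro sums_taylor_coeff holomorphic_deriv) auto
  then have "(\<lambda>n. z * (taylor_coeff (deriv f) n * z^n)) sums (z * deriv f z)"
    by (rule sums_mult)
  then have "(\<lambda>n. of_nat (Suc n) * taylor_coeff f (Suc n) * z^Suc n) sums (z * deriv f z)"
    by (simp add: taylor_coeff_deriv mult_ac del: of_nat_Suc)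
  then show ?thesis
    using sums_Suc_iff[of "\<lambda>n. of_nat n * taylor_coeff f n * z^n" "z * deriv f z"] by simp
qed

lemma summable_norm_mult_taylor_coeff:
  assumes "f holomorphic_on ball 0 R" "0 \<le> \<rho>" "\<rho> < R"
  shows "summable (\<lambda>n. norm (of_nat n * taylor_coeff f n) * \<rho>^n)"
proof -
  have "summable (\<lambda>n. norm (taylor_coeff (deriv f) n) * \<rho>^n)"
    using assms by (intro summable_norm_taylor_coeff holomorphic_deriv) auto
  then have "summable (\<lambda>n. \<rho> * (norm (taylor_coeff (deriv f) n) * \<rho>^n))"
    by (rule summable_mult)
  then have "summable (\<lambda>n. norm (of_nat (Suc n) * taylor_coeff f (Suc n)) * \<rho>^Suc n)"
    by (simp add: taylor_coeff_deriv mult_ac del: of_nat_Suc)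
  then show ?thesis
    by (rule summable_Suc_iff[THEN iffD1])
qed

lemma sums_integral_cnj_mult_radial_deriv:
  assumes "f holomorphic_on ball 0 R" "0 \<le> r" "r < R"
  shows "(\<lambda>n. of_real (2*pi*n*norm (taylor_coeff f n)^2*r^(2*n)))
           sums integral {0..2*pi} (\<lambda>\<theta>. cnj (f (rcis r \<theta>)) * (rcis r \<theta> * deriv f (rcis r \<theta>)))"
proof -
  have f': "deriv f holomorphic_on ball 0 R"
    using assms(1) by (intro holomorphic_deriv) auto
  have "(\<lambda>n. of_real (2*pi*r^(2*n)) * (cnj (taylor_coeff f n) * (of_nat n * taylor_coeff f n)))
          sums integral {0..2*pi} (\<lambda>\<theta>. cnj (f (rcis r \<theta>)) * (rcis r \<theta> * deriv f (rcis r \<theta>)))"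
  proof (rule integral_cnj_power_series_mult_power_series)
    show "(\<lambda>n. taylor_coeff f n * rcis r \<theta> ^ n) sums f (rcis r \<theta>)" for \<theta>
      using assms by (intro sums_taylor_coeff) auto
    show "(\<lambda>n. of_nat n * taylor_coeff f n * rcis r \<theta> ^ n) sums (rcis r \<theta> * deriv f (rcis r \<theta>))" for \<theta>
      using assms by (intro sums_mult_deriv_taylor_coeff) auto
    show "continuous_on {0..2*pi} (\<lambda>\<theta>. rcis r \<theta> * deriv f (rcis r \<theta>))"
      using assms f' by (intro continuous_intros continuous_on_compose_rcis holomorphic_on_imp_continuous_on)
  qed (use assms summable_norm_taylor_coeff summable_norm_mult_taylor_coeff in auto)
  moreover have "of_real (2*pi*r^(2*n)) * (cnj z * (of_nat n * z)) = of_real (2*pi*n*norm z^2*r^(2*n))"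
    for z :: complex and n
  proof -
    have "cnj z * (of_nat n * z) = of_real (real n) * of_real (norm z ^ 2)"
      by (simp only: complex_norm_square of_real_of_nat_eq) (simp add: mult_ac)
    then show ?thesis
      by (simp only: of_real_mult[symmetric]) (simp add: mult_ac)
  qed
  ultimately show ?thesis
    by (simp only:)
qed

lemma norm_le_Hinf_norm:
  assumes "bounded (f ` ball 0 1)" "z \<in> ball 0 1"
  shows "norm (f z) \<le> Hinf_norm f"
proof -
  obtain B where "\<And>w. w \<in> f ` ball 0 1 \<Longrightarrow> norm w \<le> B"
    using assms(1) by (auto simp: bounded_iff)
  then have "bdd_above ((\<lambda>z. norm (f z)) ` ball 0 1)"
    by (intro bdd_aboveI2[where M = B]) auto
  then show ?thesis
    unfolding Hinf_norm_def using assms(2) by (rule cSUP_upper2) simp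
qed

lemma norm_integral_cnj_mult_radial_deriv_le:
  assumes "f holomorphic_on ball 0 1" "bounded (f ` ball 0 1)" "0 \<le> r" "r < 1"
  shows "norm (integral {0..2*pi} (\<lambda>\<theta>. cnj (f (rcis r \<theta>)) * (rcis r \<theta> * deriv f (rcis r \<theta>))))
           \<le> Hinf_norm f * integral {0..2*pi} (\<lambda>\<theta>. norm (deriv f (rcis r \<theta>)))"
proof -
  have f_le: "norm (f z) \<le> Hinf_norm f" if "z \<in> ball 0 1" for z
    using assms(2) that by (rule norm_le_Hinf_norm)
  then have "0 \<le> Hinf_norm f"
    using norm_ge_zero order_trans by (metis centre_in_ball zero_less_one)
  have f': "deriv f holomorphic_on ball 0 1"
    using assms(1) by (intro holomorphic_deriv) auto
  have cont_f: "continuous_on {0..2*pi} (\<lambda>\<theta>. f (rcis r \<theta>))"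
    using assms by (intro continuous_on_compose_rcis holomorphic_on_imp_continuous_on)
  have cont_f': "continuous_on {0..2*pi} (\<lambda>\<theta>. deriv f (rcis r \<theta>))"
    using assms f' by (intro continuous_on_compose_rcis holomorphic_on_imp_continuous_on)
  have "norm (integral {0..2*pi} (\<lambda>\<theta>. cnj (f (rcis r \<theta>)) * (rcis r \<theta> * deriv f (rcis r \<theta>))))
      \<le> integral {0..2*pi} (\<lambda>\<theta>. Hinf_norm f * norm (deriv f (rcis r \<theta>)))"
  proof (rule integral_norm_bound_integral)
    fix \<theta>
    have "norm (cnj (f (rcis r \<theta>)) * (rcis r \<theta> * deriv f (rcis r \<theta>)))
        = norm (f (rcis r \<theta>)) * (r * norm (deriv f (rcis r \<theta>)))"
      using assms(3) by (simp add: norm_mult)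
    also have "\<dots> \<le> Hinf_norm f * (1 * norm (deriv f (rcis r \<theta>)))"
      using f_le[of "rcis r \<theta>"] \<open>0 \<le> Hinf_norm f\<close> assms(3,4) by (intro mult_mono) auto
    finally show "norm (cnj (f (rcis r \<theta>)) * (rcis r \<theta> * deriv f (rcis r \<theta>)))
        \<le> Hinf_norm f * norm (deriv f (rcis r \<theta>))"
      by simp
  qed (use cont_f cont_f' in \<open>auto intro!: integrable_continuous_interval continuous_intros\<close>)
  then show ?thesis
    by simp
qed

theorem mainTheorem1:
  fixes f :: "complex \<Rightarrow> complex" and r :: real
  assumes "f holomorphic_on ball 0 1"
    and "bounded (f ` ball 0 1)"
    and "0 \<le> r" and "r < 1"
  shows "area_fn r f \<le>
           (1/2) * Hinf_norm f * integral {0..2*pi} (\<lambda>\<theta>. cmod (deriv f (of_real r * cis \<theta>)))"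
proof -
  define J where
    "J = integral {0..2*pi} (\<lambda>\<theta>. cnj (f (rcis r \<theta>)) * (rcis r \<theta> * deriv f (rcis r \<theta>)))"
  have "(\<lambda>n. 2 * (pi * n * norm (taylor_coeff f n)^2 * r^(2*n))) sums (2 * area_fn r f)"
    using area_fn_sums[OF assms(1,3,4)] by (rule sums_mult)
  then have "(\<lambda>n. of_real (2*pi*n*norm (taylor_coeff f n)^2*r^(2*n))) sums (of_real (2 * area_fn r f) :: complex)"
    by (intro sums_of_real) (simp only: mult.assoc)
  moreover have "(\<lambda>n. of_real (2*pi*n*norm (taylor_coeff f n)^2*r^(2*n))) sums J"
    unfolding J_def using assms(1,3,4) by (rule sums_integral_cnj_mult_radial_deriv)
  ultimately have "J = of_real (2 * area_fn r f)"
    using sums_unique2 by blast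
  then have "2 * area_fn r f \<le> norm J"
    by simp
  also have "\<dots> \<le> Hinf_norm f * integral {0..2*pi} (\<lambda>\<theta>. norm (deriv f (rcis r \<theta>)))"
    unfolding J_def using assms by (rule norm_integral_cnj_mult_radial_deriv_le)
  finally show ?thesis
    by (simp add: rcis_def)
qed

end
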